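(* Let $R\ge 1$, let $\mathbf{x}=(x_1,\dots,x_R)$ be a vector of pairwise distinct reals and $\mathbf{c}\in\mathbb{R}^R$. If $R$ is odd, then $\det B(\mathbf{x},\mathbf{c})=0$. If $R=2T$ is even, then $$\det B(\mathbf{x},\mathbf{c})=\prod_{k=1}^R c_k^2\sum_{(m_i,n_i)_{i=1}^T\in E}\ \prod_{i=1}^T a_{m_i,n_i}^2=\sum_{(m_i,n_i)_{i=1}^T\in E}\ \prod_{i=1}^T b_{m_i,n_i}^2,$$ where $E$ is the set of families $(m_i,n_i)_{i=1}^T$ of integer pairs such that $\bigcup_{i=1}^T\{m_i,n_i\}=\{1,\dots,R\}$, $m_i<n_i$ for all $i$, and $m_1<m_2<\dots<m_T$ (i.e. $E$ indexes the perfect matchings of $\{1,\dots,R\}$).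
   Context: For pairwise distinct reals $x_1,\dots,x_R$, $a_{m,n}=a_{m,n}(\mathbf{x})=0$ if $m=n$ and $a_{m,n}=\frac{1}{x_m-x_n}$ if $m\ne n$. For $\mathbf{c}=(c_1,\dots,c_R)\in\mathbb{R}^R$, $B(\mathbf{x},\mathbf{c})$ is the $R\times R$ matrix with entries $b_{m,n}=c_mc_na_{m,n}$ (so $b_{m,m}=0$ and $b_{m,n}=\frac{c_mc_n}{x_m-x_n}$ for $m\ne n$). *)

theory Defs
  imports "Jordan_Normal_Form.Determinant"
begin

text \<open>Indices are 1-based as in the paper: x, c are given as functions on nat,
  only their values on 1..R matter.\<close>

definition a_entry :: "(nat \<Rightarrow> real) \<Rightarrow> nat \<Rightarrow> nat \<Rightarrow> real" where
  "a_entry x m n = (if m = n then 0 else 1 / (x m - x n))"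

definition b_entry :: "(nat \<Rightarrow> real) \<Rightarrow> (nat \<Rightarrow> real) \<Rightarrow> nat \<Rightarrow> nat \<Rightarrow> real" where
  "b_entry x c m n = c m * c n * a_entry x m n"

text \<open>The R x R matrix B(x,c); JNF matrices are 0-indexed, so entry (i,j) is b_{i+1,j+1}.\<close>
definition B_mat :: "nat \<Rightarrow> (nat \<Rightarrow> real) \<Rightarrow> (nat \<Rightarrow> real) \<Rightarrow> real mat" where
  "B_mat R x c = mat R R (\<lambda>(i, j). b_entry x c (Suc i) (Suc j))"

text \<open>The set E of families (m_i,n_i), i=1..T, stored as a list of length T
  (list position i-1 holds the i-th pair).\<close>
definition matchings_E :: "nat \<Rightarrow> nat \<Rightarrow> (nat \<times> nat) list set" where
  "matchings_E R T = {ps. length ps = T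
     \<and> (\<Union>i<T. {fst (ps ! i), snd (ps ! i)}) = {1..R}
     \<and> (\<forall>i<T. fst (ps ! i) < snd (ps ! i))
     \<and> sorted_wrt (<) (map fst ps)}"

end

theory Submission
  imports Defs
begin

text \<open>Since \<open>b\<^sub>m\<^sub>n = c\<^sub>m c\<^sub>n a\<^sub>m\<^sub>n\<close>, \<open>det B\<close> is \<open>\<Prod>\<^sub>k c\<^sub>k\<^sup>2\<close> times \<open>det A\<close>. The Cauchy-type
  kernel \<open>a\<^sub>m\<^sub>n = 1/(x\<^sub>m - x\<^sub>n)\<close> is skew and satisfies the three-term identity
  \<open>a\<^sub>k\<^sub>s a\<^sub>s\<^sub>m = a\<^sub>k\<^sub>m (a\<^sub>s\<^sub>m - a\<^sub>s\<^sub>k)\<close>. Writing a permutation that moves \<open>s\<close> as a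
  transposition \<open>(s q(k))\<close> composed with a permutation \<open>q\<close> of the other indices, this identity
  makes all terms of the Leibniz expansion telescope away except those in which \<open>s\<close> lies in a
  2-cycle \<open>(s k)\<close>. So the determinant of \<open>A\<close> on an index set \<open>S\<close> equals
  \<open>\<Sum>\<^sub>k a\<^sub>s\<^sub>k\<^sup>2\<close> times the determinant on \<open>S - {s, k}\<close>: the recursion of the sum over
  perfect matchings of the products of \<open>a\<^sub>m\<^sub>n\<^sup>2\<close>, which vanishes for odd sizes.\<close>

lemma permutes_Diff_singleton_iff:
  assumes "k \<in> A"
  shows "q permutes (A - {k}) \<longleftrightarrow> q permutes A \<and> q k = k"
proof
  assume q: "q permutes (A - {k})"
  show "q permutes A \<and> q k = k"
    using permutes_subset[OF q, of A] permutes_not_in[OF q, of k] by simp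
next
  assume q: "q permutes A \<and> q k = k"
  show "q permutes (A - {k})"
    by (rule permutes_superset[of q A]) (use q in auto)
qed

lemma bij_betw_transpose_compose:
  assumes s: "s \<in> S"
  shows "bij_betw (\<lambda>(q, k). transpose s (q k) \<circ> q)
           ({q. q permutes (S - {s})} \<times> (S - {s})) {p. p permutes S \<and> p s \<noteq> s}"
proof -
  have fwd: "transpose s (q k) \<circ> q permutes S \<and> (transpose s (q k) \<circ> q) s = q k
             \<and> q k \<noteq> s \<and> (transpose s (q k) \<circ> q) k = s"
    if q: "q permutes S - {s}" and k: "k \<in> S - {s}" for q k
  proof -
    have "q s = s" using permutes_not_in[OF q] by simp
    moreover have "q k \<in> S - {s}" using permutes_in_image[OF q] k by simp
    ultimately show ?thesis
      using permutes_compose[OF permutes_subset[OF q, of S] permutes_swap_id[OF s, of "q k"]] by auto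
  qed
  have bwd: "transpose s (p s) \<circ> p permutes S - {s} \<and> inv_into UNIV p s \<in> S - {s}
             \<and> p (inv_into UNIV p s) = s"
    if p: "p permutes S" "p s \<noteq> s" for p
  proof -
    have "p s \<in> S" using permutes_in_image[OF p(1)] s by simp
    then have "transpose s (p s) \<circ> p permutes S"
      using permutes_compose[OF p(1) permutes_swap_id[OF s]] by simp
    moreover have "inv_into UNIV p s \<in> S" using permutes_in_image[OF permutes_inv[OF p(1)]] s by simp
    moreover have ps: "p (inv_into UNIV p s) = s" using permutes_inverses(1)[OF p(1)] .
    moreover have "(transpose s (p s) \<circ> p) s = s" by simp
    moreover have "inv_into UNIV p s \<noteq> s" using ps p(2) by metis
    ultimately show ?thesis
      using permutes_Diff_singleton_iff[OF s] by simp
  qed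
  show ?thesis
  proof (rule bij_betw_byWitness[where f' = "\<lambda>p. (transpose s (p s) \<circ> p, inv_into UNIV p s)"],
      goal_cases)
    case 1
    show ?case
      using fwd permutes_inv_eq by (fastforce simp: o_assoc)
  next
    case 2
    show ?case
    proof
      fix p assume "p \<in> {p. p permutes S \<and> p s \<noteq> s}"
      with bwd have "p (inv_into UNIV p s) = s" by blast
      then show "(case (transpose s (p s) \<circ> p, inv_into UNIV p s) of
                    (q, k) \<Rightarrow> transpose s (q k) \<circ> q) = p"
        by (simp add: o_assoc)
    qed
  next
    case 3
    show ?case
      using fwd by auto
  next
    case 4
    show ?case
      using bwd by auto
  qed
qed

lemma sum_permutes_if_fixed:
  assumes "finite A" and "k \<in> A"
  shows "(\<Sum>q\<in>{q. q permutes A}. if q k = k then f q else 0) = (\<Sum>q\<in>{q. q permutes (A - {k})}. f q)"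
proof -
  have "{q \<in> {q. q permutes A}. q k = k} = {q. q permutes (A - {k})}"
    using permutes_Diff_singleton_iff[OF assms(2)] by blast
  then show ?thesis
    using sum.inter_filter[OF finite_permutations[OF assms(1)], of f "\<lambda>q. q k = k"] by simp
qed

definition leibniz_det :: "('a \<Rightarrow> 'a \<Rightarrow> 'b::comm_ring_1) \<Rightarrow> 'a set \<Rightarrow> 'b" where
  "leibniz_det g S = (\<Sum>p\<in>{p. p permutes S}. of_int (sign p) * (\<Prod>i\<in>S. g i (p i)))"

lemma leibniz_det_empty [simp]: "leibniz_det g {} = 1"
  by (simp add: leibniz_det_def permutes_empty)

lemma leibniz_det_term_transpose_compose:
  fixes g :: "'a \<Rightarrow> 'a \<Rightarrow> 'b::comm_ring_1"
  assumes fin: "finite S" and s: "s \<in> S" and q: "q permutes (S - {s})" and k: "k \<in> S - {s}"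
  shows "of_int (sign (transpose s (q k) \<circ> q)) * (\<Prod>i\<in>S. g i ((transpose s (q k) \<circ> q) i))
       = - of_int (sign q) * (g s (q k) * g k s * (\<Prod>i\<in>S - {s} - {k}. g i (q i)))"
proof -
  let ?p = "transpose s (q k) \<circ> q"
  have qs: "q s = s" using permutes_not_in[OF q] by simp
  have qk: "q k \<in> S - {s}" using permutes_in_image[OF q] k by simp
  have "permutation q" using q fin by (auto simp: permutation_permutes)
  moreover have "s \<noteq> q k" using qk by auto
  ultimately have sign: "sign ?p = - sign q"
    by (simp add: sign_compose[OF permutation_swap_id] sign_swap_id)
  have rest: "?p i = q i" if "i \<in> S - {s} - {k}" for i
  proof -
    have "q i \<noteq> q k" using permutes_inj[OF q] that by (auto dest: injD)
    moreover have "q i \<noteq> s" using permutes_in_image[OF q, of i] that by auto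
    ultimately show ?thesis by (simp add: transpose_def)
  qed
  have "(\<Prod>i\<in>S. g i (?p i)) = g s (?p s) * (g k (?p k) * (\<Prod>i\<in>S - {s} - {k}. g i (?p i)))"
    using fin s k by (simp add: prod.remove[of S s] prod.remove[of "S - {s}" k])
  also have "(\<Prod>i\<in>S - {s} - {k}. g i (?p i)) = (\<Prod>i\<in>S - {s} - {k}. g i (q i))"
    using rest by simp
  finally show ?thesis using sign qs by (simp add: mult.assoc)
qed

lemma sum_permutes_diff_eq_0:
  fixes f :: "'a \<Rightarrow> 'b::ab_group_add"
  assumes "q permutes A"
  shows "(\<Sum>k\<in>A. f (q k) - f k) = 0"
  using sum.permute[OF assms, of f] by (simp add: sum_subtractf comp_def)

text \<open>The three-term identity splits each summand into a fixed-point term and a multiple of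
  \<open>g s (q k) - g s k\<close>, and the latter telescope away.\<close>
lemma sum_transpose_terms_eq_fixed_point_terms:
  fixes g :: "'a \<Rightarrow> 'a \<Rightarrow> 'b::comm_ring_1"
  assumes fin: "finite S" and q: "q permutes (S - {s})"
    and three_term: "\<And>k m. k \<in> S - {s} \<Longrightarrow> m \<in> S - {s} \<Longrightarrow> k \<noteq> m \<Longrightarrow>
               g k s * g s m = g k m * (g s m - g s k)"
  shows "(\<Sum>k\<in>S - {s}. g s (q k) * g k s * (\<Prod>i\<in>S - {s} - {k}. g i (q i)))
       = (\<Sum>k\<in>S - {s}. if q k = k then g s k * g k s * (\<Prod>i\<in>S - {s} - {k}. g i (q i)) else 0)"
proof -
  let ?P = "\<lambda>k. \<Prod>i\<in>S - {s} - {k}. g i (q i)"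
  have split: "g s (q k) * g k s * ?P k
       = (if q k = k then g s k * g k s * ?P k else 0) + (g s (q k) - g s k) * (\<Prod>i\<in>S - {s}. g i (q i))"
    if k: "k \<in> S - {s}" for k
  proof (cases "q k = k")
    case False
    have "q k \<in> S - {s}" using permutes_in_image[OF q] k by simp
    then have three: "g k s * g s (q k) = g k (q k) * (g s (q k) - g s k)"
      using three_term k False by metis
    have "g s (q k) * g k s * ?P k = (g k s * g s (q k)) * ?P k" by (simp add: mult_ac)
    also have "\<dots> = (g s (q k) - g s k) * (g k (q k) * ?P k)" by (simp add: three mult_ac)
    also have "g k (q k) * ?P k = (\<Prod>i\<in>S - {s}. g i (q i))"
      using fin k by (simp add: prod.remove[of "S - {s}" k])
    finally show ?thesis using False by simp
  qed simp
  have "(\<Sum>k\<in>S - {s}. g s (q k) * g k s * ?P k)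
      = (\<Sum>k\<in>S - {s}. if q k = k then g s k * g k s * ?P k else 0)
        + (\<Sum>k\<in>S - {s}. g s (q k) - g s k) * (\<Prod>i\<in>S - {s}. g i (q i))"
    by (simp add: split sum.distrib sum_distrib_right)
  then show ?thesis
    using sum_permutes_diff_eq_0[OF q, of "g s"] by simp
qed

text \<open>Only permutations whose cycle through \<open>s\<close> is a transposition contribute.\<close>
lemma leibniz_det_expansion:
  fixes g :: "'a \<Rightarrow> 'a \<Rightarrow> 'b::comm_ring_1"
  assumes fin: "finite S" and s: "s \<in> S"
    and diag: "g s s = 0"
    and three_term: "\<And>k m. k \<in> S - {s} \<Longrightarrow> m \<in> S - {s} \<Longrightarrow> k \<noteq> m \<Longrightarrow>
               g k s * g s m = g k m * (g s m - g s k)"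
  shows "leibniz_det g S = (\<Sum>k\<in>S - {s}. - (g s k * g k s) * leibniz_det g (S - {s} - {k}))"
proof -
  let ?w = "\<lambda>p. of_int (sign p) * (\<Prod>i\<in>S. g i (p i)) :: 'b"
  let ?Q = "{q. q permutes (S - {s})}"
  let ?T = "\<lambda>q k. g s (q k) * g k s * (\<Prod>i\<in>S - {s} - {k}. g i (q i))"
  let ?A = "\<lambda>q k. - of_int (sign q) * (g s k * g k s * (\<Prod>i\<in>S - {s} - {k}. g i (q i)))"
  have split: "{p. p permutes S} = {p. p permutes S \<and> p s = s} \<union> {p. p permutes S \<and> p s \<noteq> s}"
    by blast
  have "leibniz_det g S = sum ?w {p. p permutes S \<and> p s = s} + sum ?w {p. p permutes S \<and> p s \<noteq> s}"
    unfolding leibniz_det_def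
    by (subst split, rule sum.union_disjoint) (use finite_permutations[OF fin] in auto)
  also have "sum ?w {p. p permutes S \<and> p s = s} = 0"
  proof (rule sum.neutral, clarify)
    fix p assume "p permutes S" "p s = s"
    then have "(\<Prod>i\<in>S. g i (p i)) = 0"
      using fin s diag by (intro prod_zero bexI[of _ s]) auto
    then show "?w p = 0" by simp
  qed
  also have "sum ?w {p. p permutes S \<and> p s \<noteq> s} = (\<Sum>(q, k)\<in>?Q \<times> (S - {s}). ?w (transpose s (q k) \<circ> q))"
    using sum.reindex_bij_betw[OF bij_betw_transpose_compose[OF s], of ?w] by (simp add: case_prod_unfold)
  also have "\<dots> = (\<Sum>q\<in>?Q. \<Sum>k\<in>S - {s}. - of_int (sign q) * ?T q k)"
    unfolding sum.cartesian_product[symmetric]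
    by (intro sum.cong refl) (use leibniz_det_term_transpose_compose[OF fin s] in auto)
  also have "\<dots> = (\<Sum>q\<in>?Q. \<Sum>k\<in>S - {s}. if q k = k then ?A q k else 0)"
  proof (rule sum.cong[OF refl])
    fix q assume q: "q \<in> ?Q"
    have "(\<Sum>k\<in>S - {s}. - of_int (sign q) * ?T q k) = - of_int (sign q) * (\<Sum>k\<in>S - {s}. ?T q k)"
      by (rule sum_distrib_left[symmetric])
    also have "(\<Sum>k\<in>S - {s}. ?T q k)
        = (\<Sum>k\<in>S - {s}. if q k = k then g s k * g k s * (\<Prod>i\<in>S - {s} - {k}. g i (q i)) else 0)"
      using sum_transpose_terms_eq_fixed_point_terms[of S q s g] fin q three_term by simp
    also have "- of_int (sign q) * \<dots> = (\<Sum>k\<in>S - {s}. if q k = k then ?A q k else 0)"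
      by (subst sum_distrib_left) (intro sum.cong refl, simp)
    finally show "(\<Sum>k\<in>S - {s}. - of_int (sign q) * ?T q k) = (\<Sum>k\<in>S - {s}. if q k = k then ?A q k else 0)" .
  qed
  also have "\<dots> = (\<Sum>k\<in>S - {s}. \<Sum>q\<in>?Q. if q k = k then ?A q k else 0)"
    by (rule sum.swap)
  also have "\<dots> = (\<Sum>k\<in>S - {s}. - (g s k * g k s) * leibniz_det g (S - {s} - {k}))"
  proof (intro sum.cong refl)
    fix k assume k: "k \<in> S - {s}"
    have "(\<Sum>q\<in>?Q. if q k = k then ?A q k else 0) = (\<Sum>q\<in>{q. q permutes (S - {s} - {k})}. ?A q k)"
      using fin k by (intro sum_permutes_if_fixed) auto
    then show "(\<Sum>q\<in>?Q. if q k = k then ?A q k else 0) = - (g s k * g k s) * leibniz_det g (S - {s} - {k})"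
      by (simp add: leibniz_det_def sum_distrib_left algebra_simps)
  qed
  finally show ?thesis by simp
qed

text \<open>The counter \<open>n\<close> only serves the recursion and must equal \<open>card S\<close>.\<close>
fun hafnian :: "('a::linorder \<Rightarrow> 'a \<Rightarrow> 'b::comm_semiring_1) \<Rightarrow> nat \<Rightarrow> 'a set \<Rightarrow> 'b" where
  "hafnian w 0 S = 1"
| "hafnian w (Suc 0) S = 0"
| "hafnian w (Suc (Suc n)) S = (\<Sum>j\<in>S - {Min S}. w (Min S) j * hafnian w n (S - {Min S} - {j}))"

lemma hafnian_odd: "odd n \<Longrightarrow> hafnian w n S = 0"
  by (induction w n S rule: hafnian.induct) auto

lemma hafnian_image:
  assumes "strict_mono f" and "finite S"
  shows "hafnian w n (f ` S) = hafnian (\<lambda>i j. w (f i) (f j)) n S"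
  using assms(2)
proof (induction n arbitrary: S rule: induct_nat_012)
  case (ge2 n)
  show ?case
  proof (cases "S = {}")
    case False
    let ?m = "Min S"
    have inj: "inj f" using assms(1) by (rule strict_mono_imp_inj_on)
    have "Min (f ` S) = f ?m"
      using mono_Min_commute[OF strict_mono_mono[OF assms(1)] ge2.prems False] by simp
    moreover have "f ` S - {f ?m} = f ` (S - {?m})"
      by (simp add: image_set_diff[OF inj])
    ultimately have "hafnian w (Suc (Suc n)) (f ` S)
        = (\<Sum>j\<in>f ` (S - {?m}). w (f ?m) j * hafnian w n (f ` (S - {?m}) - {j}))"
      by simp
    also have "\<dots> = (\<Sum>j\<in>S - {?m}. w (f ?m) (f j) * hafnian w n (f ` (S - {?m}) - {f j}))"
      by (simp add: sum.reindex inj_on_subset[OF inj subset_UNIV])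
    also have "\<dots> = (\<Sum>j\<in>S - {?m}. w (f ?m) (f j) * hafnian w n (f ` (S - {?m} - {j})))"
      by (simp add: image_set_diff[OF inj])
    also have "\<dots> = hafnian (\<lambda>i j. w (f i) (f j)) (Suc (Suc n)) S"
      using ge2.IH(1) ge2.prems by simp
    finally show ?thesis .
  qed simp
qed simp_all

lemma hafnian_scale:
  fixes w :: "'a::linorder \<Rightarrow> 'a \<Rightarrow> 'b::comm_semiring_1"
  assumes "finite S" and "card S = n"
  shows "hafnian (\<lambda>i j. d i * d j * w i j) n S = (\<Prod>k\<in>S. d k) * hafnian w n S"
  using assms
proof (induction w n S rule: hafnian.induct)
  case (3 w n S)
  let ?m = "Min S"
  have m: "?m \<in> S" using 3 by (intro Min_in) auto
  have "hafnian (\<lambda>i j. d i * d j * w i j) (Suc (Suc n)) S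
      = (\<Sum>j\<in>S - {?m}. d ?m * d j * w ?m j * ((\<Prod>k\<in>S - {?m} - {j}. d k) * hafnian w n (S - {?m} - {j})))"
    using 3 m by (simp add: card_Diff_singleton)
  also have "\<dots> = (\<Sum>j\<in>S - {?m}. (\<Prod>k\<in>S. d k) * (w ?m j * hafnian w n (S - {?m} - {j})))"
  proof (intro sum.cong refl)
    fix j assume j: "j \<in> S - {?m}"
    have "(\<Prod>k\<in>S. d k) = d ?m * (d j * (\<Prod>k\<in>S - {?m} - {j}. d k))"
      using "3.prems"(1) m j by (simp add: prod.remove[of S ?m] prod.remove[of "S - {?m}" j])
    then show "d ?m * d j * w ?m j * ((\<Prod>k\<in>S - {?m} - {j}. d k) * hafnian w n (S - {?m} - {j}))
       = (\<Prod>k\<in>S. d k) * (w ?m j * hafnian w n (S - {?m} - {j}))" by (simp add: mult_ac)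
  qed
  also have "\<dots> = (\<Prod>k\<in>S. d k) * hafnian w (Suc (Suc n)) S"
    by (simp add: sum_distrib_left)
  finally show ?case .
qed auto

lemma leibniz_det_eq_hafnian:
  fixes g :: "'a::linorder \<Rightarrow> 'a \<Rightarrow> 'b::comm_ring_1"
  assumes "finite S"
    and "\<And>i. i \<in> S \<Longrightarrow> g i i = 0"
    and "\<And>i j. i \<in> S \<Longrightarrow> j \<in> S \<Longrightarrow> g i j = - g j i"
    and "\<And>k s m. k \<in> S \<Longrightarrow> s \<in> S \<Longrightarrow> m \<in> S \<Longrightarrow> k \<noteq> s \<Longrightarrow> m \<noteq> s \<Longrightarrow> k \<noteq> m \<Longrightarrow>
               g k s * g s m = g k m * (g s m - g s k)"
  shows "leibniz_det g S = hafnian (\<lambda>i j. (g i j)\<^sup>2) (card S) S"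
  using assms
proof (induction "card S" arbitrary: S rule: induct_nat_012)
  case 0
  have "S = {}" using "0.hyps" "0.prems"(1) by simp
  then show ?case by simp
next
  case 1
  obtain s where S: "S = {s}"
    using "1.hyps" card_1_singleton_iff[of S] by auto
  then have "leibniz_det g S = 0"
    using leibniz_det_expansion[of S s g] "1.prems"(2) by simp
  then show ?case using S by simp
next
  case (ge2 n)
  let ?s = "Min S"
  let ?w = "\<lambda>i j. (g i j)\<^sup>2"
  have s: "?s \<in> S" using ge2.hyps(3) ge2.prems(1) by (intro Min_in) auto
  have "leibniz_det g S = (\<Sum>k\<in>S - {?s}. - (g ?s k * g k ?s) * leibniz_det g (S - {?s} - {k}))"
  proof (rule leibniz_det_expansion[of S ?s g, OF ge2.prems(1) s ge2.prems(2)[OF s]])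
    fix k m assume "k \<in> S - {?s}" "m \<in> S - {?s}" "k \<noteq> m"
    then show "g k ?s * g ?s m = g k m * (g ?s m - g ?s k)" using ge2.prems(4) s by blast
  qed
  also have "\<dots> = (\<Sum>k\<in>S - {?s}. ?w ?s k * hafnian ?w n (S - {?s} - {k}))"
  proof (intro sum.cong refl)
    fix k assume k: "k \<in> S - {?s}"
    have card: "n = card (S - {?s} - {k})"
      using ge2.hyps(3) ge2.prems(1) s k by (simp add: card_Diff_singleton)
    have "leibniz_det g (S - {?s} - {k}) = hafnian ?w (card (S - {?s} - {k})) (S - {?s} - {k})"
      by (rule ge2.hyps(1)[OF card]) (use ge2.prems in blast)+
    then have "leibniz_det g (S - {?s} - {k}) = hafnian ?w n (S - {?s} - {k})"
      by (simp only: card)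
    moreover have "- (g ?s k * g k ?s) = ?w ?s k"
      using ge2.prems(3)[of k ?s] k s by (simp add: power2_eq_square)
    ultimately show "- (g ?s k * g k ?s) * leibniz_det g (S - {?s} - {k})
        = ?w ?s k * hafnian ?w n (S - {?s} - {k})" by simp
  qed
  also have "\<dots> = hafnian (\<lambda>i j. (g i j)\<^sup>2) (card S) S"
    by (simp flip: ge2.hyps(3))
  finally show ?case .
qed

definition ordered_matchings :: "'a::linorder set \<Rightarrow> nat \<Rightarrow> ('a \<times> 'a) list set" where
  "ordered_matchings S T = {ps. length ps = T
     \<and> (\<Union>i<T. {fst (ps ! i), snd (ps ! i)}) = S
     \<and> (\<forall>i<T. fst (ps ! i) < snd (ps ! i))
     \<and> sorted_wrt (<) (map fst ps)}"

lemma UN_pairs_Cons: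
  "(\<Union>i<Suc n. {fst ((p # ps) ! i), snd ((p # ps) ! i)})
     = {fst p, snd p} \<union> (\<Union>i<n. {fst (ps ! i), snd (ps ! i)})"
  by (auto simp: lessThan_Suc_eq_insert_0)

lemma card_UN_pairs_le: "card (\<Union>i<n. {fst (ps ! i), snd (ps ! i)}) \<le> 2 * n"
proof -
  have "card (\<Union>i<n. {fst (ps ! i), snd (ps ! i)}) \<le> (\<Sum>i<n. card {fst (ps ! i), snd (ps ! i)})"
    by (rule card_UN_le) simp
  also have "\<dots> \<le> (\<Sum>i<n. 2)" by (intro sum_mono) (simp add: card_insert_if)
  finally show ?thesis by simp
qed

lemma finite_ordered_matchings:
  assumes "finite S"
  shows "finite (ordered_matchings S T)"
proof (rule finite_subset)
  show "ordered_matchings S T \<subseteq> {ps. set ps \<subseteq> S \<times> S \<and> length ps = T}"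
  proof
    fix ps assume ps: "ps \<in> ordered_matchings S T"
    have "set ps \<subseteq> S \<times> S"
    proof
      fix p assume "p \<in> set ps"
      then obtain i where "i < length ps" "ps ! i = p" by (auto simp: in_set_conv_nth)
      then show "p \<in> S \<times> S" using ps unfolding ordered_matchings_def by (cases p) fastforce
    qed
    then show "ps \<in> {ps. set ps \<subseteq> S \<times> S \<and> length ps = T}"
      using ps by (simp add: ordered_matchings_def)
  qed
  show "finite {ps. set ps \<subseteq> S \<times> S \<and> length ps = T}"
    using finite_lists_length_eq[of "S \<times> S" T] assms by simp
qed

lemma ordered_matchings_Suc_obtain_Cons:
  assumes fin: "finite S" and card: "card S = 2 * Suc T" and ps: "ps \<in> ordered_matchings S (Suc T)"
  obtains j ps' where "j \<in> S - {Min S}" "ps' \<in> ordered_matchings (S - {Min S} - {j}) T"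
    "ps = (Min S, j) # ps'"
proof -
  obtain a b ps' where pps: "ps = (a, b) # ps'" and len: "length ps' = T"
    using ps unfolding ordered_matchings_def by (cases ps) auto
  let ?U = "\<Union>i<T. {fst (ps' ! i), snd (ps' ! i)}"
  have SU: "S = {a, b} \<union> ?U"
    using ps unfolding ordered_matchings_def pps by (simp only: UN_pairs_Cons mem_Collect_eq) simp
  have lt: "\<forall>i<Suc T. fst (ps ! i) < snd (ps ! i)" and srt: "sorted_wrt (<) (map fst ps)"
    using ps unfolding ordered_matchings_def by simp_all
  then have ab: "a < b" and lt': "\<forall>i<T. fst (ps' ! i) < snd (ps' ! i)"
    and srt': "sorted_wrt (<) (map fst ps')"
    using pps by (auto dest: spec[of _ 0] spec[of _ "Suc _"])
  have "\<forall>i<T. a < fst (ps' ! i)" using srt pps len by (auto simp: nth_mem)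
  then have aU: "\<forall>y\<in>?U. a < y" using lt' by fastforce
  have am: "a = Min S"
    using fin SU aU ab by (intro Min_eqI[symmetric]) (auto intro: less_imp_le)
  have bU: "b \<notin> ?U"
  proof
    assume "b \<in> ?U"
    then have "card S \<le> Suc (card ?U)" using SU by (simp add: card_insert_if)
    also have "\<dots> \<le> Suc (2 * T)" using card_UN_pairs_le[where n = T and ps = ps'] by simp
    finally show False using card by simp
  qed
  have "?U = S - {a} - {b}" using SU aU bU by auto
  then have "ps' \<in> ordered_matchings (S - {a} - {b}) T"
    unfolding ordered_matchings_def using len lt' srt' by simp
  moreover have "b \<in> S - {a}" using SU ab by auto
  ultimately show ?thesis using that pps unfolding am by blast
qed

lemma Cons_Min_mem_ordered_matchings:
  assumes fin: "finite S" and j: "j \<in> S - {Min S}" and ps: "ps \<in> ordered_matchings (S - {Min S} - {j}) T"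
  shows "(Min S, j) # ps \<in> ordered_matchings S (Suc T)"
proof -
  let ?m = "Min S"
  have mS: "?m \<in> S" using fin j by (intro Min_in) auto
  have mle: "\<And>y. y \<in> S \<Longrightarrow> ?m \<le> y" using fin by simp
  have len: "length ps = T" and U: "(\<Union>i<T. {fst (ps ! i), snd (ps ! i)}) = S - {?m} - {j}"
    and lt: "\<forall>i<T. fst (ps ! i) < snd (ps ! i)" and srt: "sorted_wrt (<) (map fst ps)"
    using ps unfolding ordered_matchings_def by auto
  have mj: "?m < j" using j mle[of j] by auto
  have "(\<Union>i<Suc T. {fst (((?m, j) # ps) ! i), snd (((?m, j) # ps) ! i)}) = S"
    unfolding UN_pairs_Cons U using mS j by auto
  moreover have "\<forall>i<Suc T. fst (((?m, j) # ps) ! i) < snd (((?m, j) # ps) ! i)"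
    using lt mj by (auto simp: less_Suc_eq_0_disj)
  moreover have "\<forall>y\<in>set (map fst ps). ?m < y"
  proof
    fix y assume "y \<in> set (map fst ps)"
    then obtain i where "i < T" "y = fst (ps ! i)" using len by (auto simp: in_set_conv_nth)
    then have "y \<in> S - {?m} - {j}" using U by blast
    then show "?m < y" using mle by force
  qed
  ultimately show ?thesis
    unfolding ordered_matchings_def using len srt by simp
qed

lemma ordered_matchings_Suc:
  assumes "finite S" and "card S = 2 * Suc T"
  shows "ordered_matchings S (Suc T)
       = (\<lambda>(j, ps). (Min S, j) # ps) ` (SIGMA j:S - {Min S}. ordered_matchings (S - {Min S} - {j}) T)"
proof (rule equalityI[OF subsetI subsetI])
  fix ps assume "ps \<in> ordered_matchings S (Suc T)"
  then obtain j ps' where "j \<in> S - {Min S}" "ps' \<in> ordered_matchings (S - {Min S} - {j}) T"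
    "ps = (Min S, j) # ps'"
    using ordered_matchings_Suc_obtain_Cons assms by blast
  then show "ps \<in> (\<lambda>(j, ps). (Min S, j) # ps) ` (SIGMA j:S - {Min S}. ordered_matchings (S - {Min S} - {j}) T)"
    by (intro image_eqI[of _ _ "(j, ps')"]) auto
next
  fix ps assume "ps \<in> (\<lambda>(j, ps). (Min S, j) # ps) ` (SIGMA j:S - {Min S}. ordered_matchings (S - {Min S} - {j}) T)"
  then obtain j ps' where "j \<in> S - {Min S}" "ps' \<in> ordered_matchings (S - {Min S} - {j}) T"
    "ps = (Min S, j) # ps'"
    by auto
  then show "ps \<in> ordered_matchings S (Suc T)"
    using Cons_Min_mem_ordered_matchings[OF assms(1)] by simp
qed

lemma sum_ordered_matchings_eq_hafnian:
  fixes w :: "'a::linorder \<Rightarrow> 'a \<Rightarrow> 'b::comm_semiring_1"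
  assumes "finite S" and "card S = 2 * T"
  shows "(\<Sum>ps\<in>ordered_matchings S T. \<Prod>i<T. w (fst (ps ! i)) (snd (ps ! i))) = hafnian w (2 * T) S"
  using assms
proof (induction T arbitrary: S)
  case 0
  then have "ordered_matchings S 0 = {[]}" unfolding ordered_matchings_def by auto
  with 0 show ?case by simp
next
  case (Suc T)
  let ?m = "Min S"
  let ?W = "\<lambda>T ps. \<Prod>i<T. w (fst (ps ! i)) (snd (ps ! i))"
  have mS: "?m \<in> S" using Suc.prems by (intro Min_in) auto
  have inj: "inj_on (\<lambda>(j, ps). (?m, j) # ps) (SIGMA j:S - {?m}. ordered_matchings (S - {?m} - {j}) T)"
    by (auto simp: inj_on_def)
  have "(\<Sum>ps\<in>ordered_matchings S (Suc T). ?W (Suc T) ps)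
      = (\<Sum>(j, ps)\<in>(SIGMA j:S - {?m}. ordered_matchings (S - {?m} - {j}) T). ?W (Suc T) ((?m, j) # ps))"
    unfolding ordered_matchings_Suc[OF Suc.prems] sum.reindex[OF inj]
    by (simp add: case_prod_unfold)
  also have "\<dots> = (\<Sum>j\<in>S - {?m}. \<Sum>ps\<in>ordered_matchings (S - {?m} - {j}) T. w ?m j * ?W T ps)"
    by (subst sum.Sigma[symmetric])
      (auto simp del: prod.lessThan_Suc simp add: Suc.prems(1) finite_ordered_matchings prod.lessThan_Suc_shift)
  also have "\<dots> = (\<Sum>j\<in>S - {?m}. w ?m j * hafnian w (2 * T) (S - {?m} - {j}))"
  proof (intro sum.cong refl)
    fix j assume j: "j \<in> S - {?m}"
    have "card (S - {?m} - {j}) = 2 * T" using Suc.prems j mS by (simp add: card_Diff_singleton)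
    then show "(\<Sum>ps\<in>ordered_matchings (S - {?m} - {j}) T. w ?m j * ?W T ps)
        = w ?m j * hafnian w (2 * T) (S - {?m} - {j})"
      using Suc.IH[of "S - {?m} - {j}"] Suc.prems(1) by (simp add: sum_distrib_left[symmetric])
  qed
  also have "\<dots> = hafnian w (2 * Suc T) S" by simp
  finally show ?case .
qed

lemma a_entry_skew: "a_entry x i j = - a_entry x j i"
proof -
  have "1 / (x i - x j) = - (1 / (x j - x i))"
    by (metis minus_diff_eq minus_divide_right)
  then show ?thesis by (simp add: a_entry_def)
qed

text \<open>The partial-fraction identity \<open>1/(u v) = 1/(u + v) (1/u + 1/v)\<close> with
  \<open>u = x\<^sub>k - x\<^sub>s\<close> and \<open>v = x\<^sub>s - x\<^sub>m\<close>.\<close>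
lemma a_entry_three_term:
  assumes "inj_on x S" "k \<in> S" "s \<in> S" "m \<in> S" "k \<noteq> s" "m \<noteq> s" "k \<noteq> m"
  shows "a_entry x k s * a_entry x s m = a_entry x k m * (a_entry x s m - a_entry x s k)"
proof -
  have partial_fractions: "1 / u * (1 / v) = 1 / (u + v) * (1 / v + 1 / u)"
    if "u \<noteq> 0" "v \<noteq> 0" "u + v \<noteq> 0" for u v :: real
    using that by (simp add: field_simps)
  have "x k - x s \<noteq> 0" "x s - x m \<noteq> 0" "(x k - x s) + (x s - x m) \<noteq> 0"
    using assms by (auto dest: inj_onD)
  from partial_fractions[OF this] show ?thesis
    using assms(5-7) a_entry_skew[of x s k] by (simp add: a_entry_def)
qed

lemma det_B_mat_eq_leibniz_det:
  "det (B_mat R x c) = (\<Prod>i<R. (c (Suc i))\<^sup>2) * leibniz_det (\<lambda>i j. a_entry x (Suc i) (Suc j)) {0..<R}"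
proof -
  let ?g = "\<lambda>i j. a_entry x (Suc i) (Suc j)"
  have "det (B_mat R x c)
      = (\<Sum>p\<in>{p. p permutes {0..<R}}. of_int (sign p) * (\<Prod>i=0..<R. b_entry x c (Suc i) (Suc (p i))))"
    unfolding det_def B_mat_def
    by (simp only: dim_row_mat dim_col_mat simp_thms if_True)
      (intro sum.cong refl arg_cong2[where f = "(*)"] prod.cong, auto simp: index_mat dest: permutes_in_image)
  also have "\<dots> = (\<Sum>p\<in>{p. p permutes {0..<R}}.
                    (\<Prod>i<R. (c (Suc i))\<^sup>2) * (of_int (sign p) * (\<Prod>i\<in>{0..<R}. ?g i (p i))))"
  proof (intro sum.cong refl)
    fix p assume "p \<in> {p. p permutes {0..<R}}"
    then have "(\<Prod>i=0..<R. c (Suc (p i))) = (\<Prod>i=0..<R. c (Suc i))"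
      using prod.permute[of p "{0..<R}" "\<lambda>i. c (Suc i)"] by (simp add: comp_def)
    then have "(\<Prod>i=0..<R. b_entry x c (Suc i) (Suc (p i)))
        = (\<Prod>i<R. (c (Suc i))\<^sup>2) * (\<Prod>i\<in>{0..<R}. ?g i (p i))"
      by (simp add: b_entry_def prod.distrib power2_eq_square atLeast0LessThan)
    then show "of_int (sign p) * (\<Prod>i=0..<R. b_entry x c (Suc i) (Suc (p i)))
        = (\<Prod>i<R. (c (Suc i))\<^sup>2) * (of_int (sign p) * (\<Prod>i\<in>{0..<R}. ?g i (p i)))"
      by (simp add: mult_ac)
  qed
  also have "\<dots> = (\<Prod>i<R. (c (Suc i))\<^sup>2) * leibniz_det ?g {0..<R}"
    unfolding leibniz_det_def by (simp add: sum_distrib_left)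
  finally show ?thesis .
qed

lemma det_B_mat_eq_hafnian:
  assumes "inj_on x {1..R}"
  shows "det (B_mat R x c) = (\<Prod>k=1..R. (c k)\<^sup>2) * hafnian (\<lambda>i j. (a_entry x i j)\<^sup>2) R {1..R}"
proof -
  let ?g = "\<lambda>i j. a_entry x (Suc i) (Suc j)"
  have img: "Suc ` {0..<R} = {1..R}" by (auto simp: image_iff)
  have "leibniz_det ?g {0..<R} = hafnian (\<lambda>i j. (?g i j)\<^sup>2) R {0..<R}"
  proof -
    have inj: "inj_on x (Suc ` {0..<R})" using assms img by simp
    have "leibniz_det ?g {0..<R} = hafnian (\<lambda>i j. (?g i j)\<^sup>2) (card {0..<R}) {0..<R}"
    proof (rule leibniz_det_eq_hafnian)
      show "?g i j = - ?g j i" for i j by (rule a_entry_skew)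
      show "?g k s * ?g s m = ?g k m * (?g s m - ?g s k)"
        if "k \<in> {0..<R}" "s \<in> {0..<R}" "m \<in> {0..<R}" "k \<noteq> s" "m \<noteq> s" "k \<noteq> m" for k s m
        using that by (intro a_entry_three_term[OF inj]) auto
    qed (simp_all add: a_entry_def)
    then show ?thesis by simp
  qed
  also have "\<dots> = hafnian (\<lambda>i j. (a_entry x i j)\<^sup>2) R {1..R}"
    using hafnian_image[of Suc "{0..<R}" "\<lambda>i j. (a_entry x i j)\<^sup>2" R] img by (simp add: strict_mono_Suc_iff)
  moreover have "(\<Prod>i<R. (c (Suc i))\<^sup>2) = (\<Prod>k=1..R. (c k)\<^sup>2)"
    by (simp add: prod.atLeast1_atMost_eq)
  ultimately show ?thesis by (simp add: det_B_mat_eq_leibniz_det)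
qed

theorem theorem2:
  fixes R :: nat and x c :: "nat \<Rightarrow> real"
  assumes "R \<ge> 1"
    and "inj_on x {1..R}"
  shows "(odd R \<longrightarrow> det (B_mat R x c) = 0)
    \<and> (\<forall>T. R = 2 * T \<longrightarrow>
         det (B_mat R x c) = (\<Prod>k=1..R. (c k)\<^sup>2) *
            (\<Sum>ps\<in>matchings_E R T. \<Prod>i<T. (a_entry x (fst (ps ! i)) (snd (ps ! i)))\<^sup>2)
       \<and> (\<Prod>k=1..R. (c k)\<^sup>2) *
            (\<Sum>ps\<in>matchings_E R T. \<Prod>i<T. (a_entry x (fst (ps ! i)) (snd (ps ! i)))\<^sup>2)
         = (\<Sum>ps\<in>matchings_E R T. \<Prod>i<T. (b_entry x c (fst (ps ! i)) (snd (ps ! i)))\<^sup>2))"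
proof -
  let ?C = "\<Prod>k=1..R. (c k)\<^sup>2"
  let ?wa = "\<lambda>i j. (a_entry x i j)\<^sup>2"
  let ?wb = "\<lambda>i j. (b_entry x c i j)\<^sup>2"
  have det: "det (B_mat R x c) = ?C * hafnian ?wa R {1..R}"
    using assms(2) by (rule det_B_mat_eq_hafnian)
  have "(\<lambda>i j. (c i)\<^sup>2 * (c j)\<^sup>2 * ?wa i j) = ?wb"
    by (simp add: fun_eq_iff b_entry_def power_mult_distrib)
  then have scale: "?C * hafnian ?wa R {1..R} = hafnian ?wb R {1..R}"
    using hafnian_scale[of "{1..R}" R "\<lambda>k. (c k)\<^sup>2" ?wa] by simp
  have matchings: "(\<Sum>ps\<in>matchings_E R T. \<Prod>i<T. w (fst (ps ! i)) (snd (ps ! i))) = hafnian w R {1..R}"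
    if "R = 2 * T" for T and w :: "nat \<Rightarrow> nat \<Rightarrow> real"
    using sum_ordered_matchings_eq_hafnian[of "{1..R}" T w] that
    by (simp add: matchings_E_def ordered_matchings_def)
  show ?thesis
    using det scale matchings[of _ ?wa] matchings[of _ ?wb] hafnian_odd[of R ?wa] by auto
qed

end
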